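(* Let $P(x)=\frac1\pi\frac1{1+x^2}$, $P_k(x)=kP(kx)$ for $k=1,2,\dots$, and $\langle T_k,\varphi\rangle=\int_{\mathbb{R}}\varphi(x)P_k(x)\,dx$. Let $\Pi_k$ be the Borel measure on $\mathbb{R}^2$ with $\Pi_k(A)=\iint_A\mathcal{X}_{[-1/k,1/k]}(x-y)\,dx\,dy$ and $\langle\!\langle S_k,\Theta\rangle\!\rangle=\iint\Theta\,d\Pi_k$. For $\Phi\in\mathscr{C}_c(\mathbb{R}^2)$ let $Kir_k\Phi$ be the continuous function with $\int\varphi\,Kir_k\Phi\,P_k\,dx=\iint\varphi(x)\Phi(x,y)\,d\Pi_k(x,y)$ for all $\varphi\in\mathscr{C}_c(\mathbb{R})$. Then for every $x\in\mathbb{R}$, $$\lim_{k\to\infty}Kir_k\Phi(x)=2\pi x^2\Phi(x,x).$$ *)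

theory Defs
  imports "HOL-Analysis.Analysis"
begin

definition poisson :: "real \<Rightarrow> real" where
  "poisson x = (1 / pi) * (1 / (1 + x^2))"

definition poisson_k :: "nat \<Rightarrow> real \<Rightarrow> real" where
  "poisson_k k x = real k * poisson (real k * x)"

definition Cc :: "('a::real_normed_vector \<Rightarrow> real) \<Rightarrow> bool" where
  "Cc f \<longleftrightarrow> continuous_on UNIV f \<and> compact (closure {z. f z \<noteq> 0})"

definition Pi_k :: "nat \<Rightarrow> (real \<times> real) measure" where
  "Pi_k k = density lborel
     (\<lambda>(x, y). ennreal (indicator {- 1 / real k .. 1 / real k} (x - y)))"

end

theory Submission
  imports Defs
begin

(* Fubini turns the right-hand side of the defining identity into the integral of phi against
   g_k(x) = integral of Phi(x, x + s) over s in [-1/k, 1/k], the integral of Phi over the slice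
   at x of the band |x - y| <= 1/k. Both Kir_k P_k and g_k are continuous and have the same
   integrals against every test function, so they agree pointwise. Since
   P_k(x) = k / (pi (1 + k^2 x^2)), this gives Kir_k(x) = 2 pi (1/k^2 + x^2) (k/2) g_k(x), and
   (k/2) g_k(x) is a mean value of Phi(x, .) near x, hence tends to Phi(x, x). *)

lemma Cc_continuous: "Cc f \<Longrightarrow> continuous_on UNIV f"
  by (simp add: Cc_def)

lemma Cc_mult:
  fixes f :: "'a::real_normed_vector \<Rightarrow> real"
  assumes f: "Cc f" and g: "continuous_on UNIV g"
  shows "Cc (\<lambda>x. f x * g x)"
proof -
  have "compact (closure {x. f x \<noteq> 0} \<inter> closure {x. f x * g x \<noteq> 0})"
    using f by (simp add: Cc_def compact_Int_closed)
  moreover have "closure {x. f x * g x \<noteq> 0} \<subseteq> closure {x. f x \<noteq> 0}"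
    by (intro closure_mono) auto
  ultimately show ?thesis
    using f g by (simp add: Cc_def Int_absorb1 continuous_on_mult)
qed

lemma Cc_integrable:
  fixes f :: "'a::euclidean_space \<Rightarrow> real"
  assumes "Cc f"
  shows "integrable lborel f"
proof -
  let ?S = "closure {x. f x \<noteq> 0}"
  have "integrable lborel (\<lambda>x. indicator ?S x *\<^sub>R f x)"
    using assms unfolding Cc_def by (metis borel_integrable_compact continuous_on_subset top_greatest)
  moreover have "(\<lambda>x. indicator ?S x *\<^sub>R f x) = f"
    using closure_subset[of "{x. f x \<noteq> 0}"] by (auto simp: fun_eq_iff split: split_indicator)
  ultimately show ?thesis by simp
qed

lemma integrable_bounded_mult_Cc:
  fixes f g :: "'a::euclidean_space \<Rightarrow> real"
  assumes f: "Cc f" and g: "g \<in> borel_measurable lborel" and bound: "\<And>x. \<bar>g x\<bar> \<le> B"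
  shows "integrable lborel (\<lambda>x. g x * f x)"
proof (rule Bochner_Integration.integrable_bound)
  show "integrable lborel (\<lambda>x. B * f x)"
    using Cc_integrable[OF f] by simp
  show "(\<lambda>x. g x * f x) \<in> borel_measurable lborel"
    using g borel_measurable_continuous_onI[OF Cc_continuous[OF f]] by measurable
  show "AE x in lborel. norm (g x * f x) \<le> norm (B * f x)"
    by (auto simp: abs_mult intro!: AE_I2 mult_right_mono order_trans[OF bound abs_ge_self])
qed

definition hat :: "real \<Rightarrow> real \<Rightarrow> real \<Rightarrow> real" where
  "hat c r x = max 0 (r - \<bar>x - c\<bar>)"

lemma hat_Cc: "Cc (hat c r)"
proof -
  have "{x. hat c r x \<noteq> 0} \<subseteq> cball c \<bar>r\<bar>"
    by (auto simp: hat_def dist_real_def max_def split: if_splits)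
  then have "compact (closure {x. hat c r x \<noteq> 0})"
    by (meson bounded_cball bounded_closure bounded_subset compact_eq_bounded_closed closed_closure)
  moreover have "continuous_on UNIV (hat c r)"
    unfolding hat_def by (intro continuous_intros)
  ultimately show ?thesis
    by (simp add: Cc_def)
qed

lemma exists_Cc_integral_pos:
  fixes h :: "real \<Rightarrow> real"
  assumes h: "continuous_on UNIV h" and pos: "h x > 0"
  shows "\<exists>\<phi>. Cc \<phi> \<and> (LINT y|lborel. \<phi> y * h y) > 0"
proof -
  obtain d where "d > 0" and d: "\<And>y. dist y x < d \<Longrightarrow> dist (h y) (h x) < h x / 2"
    using h pos unfolding continuous_on_iff by (metis UNIV_I half_gt_zero)
  then have h_large: "h y > h x / 2" if "\<bar>y - x\<bar> < d" for y
    using d[of y] that unfolding dist_real_def by linarith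
  let ?I = "{x - d / 2 .. x + d / 2}"
  have lower: "h x / 2 * (d / 2) * indicator ?I y \<le> hat x d y * h y" for y
  proof (cases "y \<in> ?I")
    case True
    then have "d / 2 \<le> hat x d y" and "h x / 2 < h y"
      using h_large[of y] \<open>d > 0\<close> by (auto simp: hat_def abs_if)
    then have "h x / 2 * (d / 2) \<le> h y * hat x d y"
      using pos \<open>d > 0\<close> by (intro mult_mono) auto
    then show ?thesis
      using True by (simp add: mult.commute)
  next
    case False
    have "hat x d y * h y \<ge> 0"
      using h_large[of y] pos by (cases "\<bar>y - x\<bar> < d") (auto simp: hat_def)
    then show ?thesis
      using False by simp
  qed
  have "0 < h x / 2 * (d / 2) * d"
    using pos \<open>d > 0\<close> by simp
  also have "\<dots> = (LINT y|lborel. h x / 2 * (d / 2) * indicator ?I y)"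
    using \<open>d > 0\<close> by simp
  also have "\<dots> \<le> (LINT y|lborel. hat x d y * h y)"
    using lower Cc_integrable[OF Cc_mult[OF hat_Cc h]]
    by (intro integral_mono) (auto simp: emeasure_lborel_Icc_eq)
  finally show ?thesis
    using hat_Cc by blast
qed

lemma continuous_eq_if_Cc_integrals_eq:
  fixes f g :: "real \<Rightarrow> real"
  assumes f: "continuous_on UNIV f" and g: "continuous_on UNIV g"
    and eq: "\<And>\<phi>. Cc \<phi> \<Longrightarrow> (LINT x|lborel. \<phi> x * f x) = (LINT x|lborel. \<phi> x * g x)"
  shows "f = g"
proof
  fix x
  have zero: "(LINT y|lborel. \<phi> y * (c * (f y - g y))) = 0" if "Cc \<phi>" for \<phi> c
    using eq[OF that] Cc_integrable[OF Cc_mult[OF that f]] Cc_integrable[OF Cc_mult[OF that g]]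
    by (simp add: right_diff_distrib mult.left_commute[of _ c])
  have "\<not> c * (f x - g x) > 0" for c
    using exists_Cc_integral_pos[of "\<lambda>y. c * (f y - g y)" x] zero
    by (metis f g continuous_on_diff continuous_on_mult_left less_irrefl)
  from this[of 1] this[of "-1"] show "f x = g x"
    by simp
qed

definition band_slice :: "(real \<times> real \<Rightarrow> real) \<Rightarrow> real \<Rightarrow> real \<Rightarrow> real" where
  "band_slice Phi r x = integral {-r..r} (\<lambda>s. Phi (x, x + s))"

lemma continuous_on_band_slice:
  fixes Phi :: "real \<times> real \<Rightarrow> real"
  assumes "continuous_on UNIV Phi"
  shows "continuous_on UNIV (band_slice Phi r)"
proof -
  have "continuous_on (UNIV \<times> cbox (-r) r) (\<lambda>(x, s). Phi (x, x + s))"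
    unfolding split_beta by (intro continuous_on_compose2[OF assms] continuous_intros) auto
  then show ?thesis
    using integral_continuous_on_param[of UNIV "-r" r "\<lambda>x s. Phi (x, x + s)"]
    by (simp add: band_slice_def[abs_def])
qed

lemma band_slice_average_tendsto:
  assumes Phi: "continuous_on UNIV Phi"
  shows "((\<lambda>r. band_slice Phi r x / (2 * r)) \<longlongrightarrow> Phi (x, x)) (at_right 0)"
proof (rule tendstoI)
  fix e :: real
  assume "e > 0"
  then obtain d where "d > 0" and d: "\<And>z. dist z (x, x) < d \<Longrightarrow> dist (Phi z) (Phi (x, x)) < e / 2"
    using Phi unfolding continuous_on_iff by (metis UNIV_I half_gt_zero)
  have "dist (band_slice Phi r x / (2 * r)) (Phi (x, x)) < e" if r: "r \<in> {0<..<d}" for r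
  proof -
    have cont: "continuous_on {-r..r} (\<lambda>s. Phi (x, x + s))"
      by (intro continuous_intros continuous_on_compose2[OF Phi]) auto
    have "band_slice Phi r x - 2 * r * Phi (x, x) = integral {-r..r} (\<lambda>s. Phi (x, x + s) - Phi (x, x))"
      using r integrable_continuous_real[OF cont]
      by (subst integral_diff) (auto simp: band_slice_def)
    also have "norm \<dots> \<le> e / 2 * (r - - r)"
      using r d by (intro integral_bound continuous_on_diff cont continuous_on_const)
        (auto simp: dist_Pair_Pair dist_real_def less_imp_le)
    finally have "\<bar>band_slice Phi r x / (2 * r) - Phi (x, x)\<bar> \<le> e / 2"
      using r by (simp add: field_simps abs_divide)
    then show ?thesis
      using \<open>e > 0\<close> by (simp add: dist_real_def)
  qed
  then show "\<forall>\<^sub>F r in at_right 0. dist (band_slice Phi r x / (2 * r)) (Phi (x, x)) < e"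
    using eventually_at_right_real[OF \<open>d > 0\<close>] by (auto elim: eventually_mono)
qed

lemma band_slice_eq_lborel_integral:
  fixes Phi :: "real \<times> real \<Rightarrow> real"
  assumes Phi: "continuous_on UNIV Phi"
  shows "band_slice Phi r x = (LINT y|lborel. indicator {-r..r} (x - y) * Phi (x, y))"
proof -
  have cont: "continuous_on {-r..r} (\<lambda>s. Phi (x, x + s))"
    by (intro continuous_on_compose2[OF Phi] continuous_intros) auto
  have "(LINT y|lborel. indicator {-r..r} (x - y) * Phi (x, y))
      = (LINT s|lborel. indicator {-r..r} (x - (x + s)) * Phi (x, x + s))"
    using lborel_integral_real_affine[where c=1 and t=x
        and f="\<lambda>y. indicator {-r..r} (x - y) * Phi (x, y)"]
    by simp
  also have "\<dots> = (LINT s|lborel. indicator {-r..r} s * Phi (x, x + s))"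
    by (intro Bochner_Integration.integral_cong) (auto split: split_indicator)
  also have "\<dots> = band_slice Phi r x"
    using set_borel_integral_eq_integral(2)[OF borel_integrable_atLeastAtMost'[OF cont]]
    by (simp add: band_slice_def set_lebesgue_integral_def)
  finally show ?thesis ..
qed

lemma integral_band_density:
  fixes Phi :: "real \<times> real \<Rightarrow> real" and \<phi> :: "real \<Rightarrow> real"
  assumes Phi: "Cc Phi" and \<phi>: "continuous_on UNIV \<phi>"
  shows "(LINT z|density lborel (\<lambda>(x, y). ennreal (indicator {-r..r} (x - y))). \<phi> (fst z) * Phi z)
       = (LINT x|lborel. \<phi> x * band_slice Phi r x)"
proof -
  let ?w = "\<lambda>z::real \<times> real. indicator {-r..r} (fst z - snd z) :: real"
  have [measurable]: "\<phi> \<in> borel_measurable borel" "Phi \<in> borel_measurable (borel \<Otimes>\<^sub>M borel)"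
    using \<phi> Cc_continuous[OF Phi] by (auto simp: borel_prod intro: borel_measurable_continuous_onI)
  have "Cc (\<lambda>z. Phi z * \<phi> (fst z))"
    by (intro Cc_mult Phi continuous_on_compose2[OF \<phi>] continuous_intros) auto
  then have int: "integrable (lborel \<Otimes>\<^sub>M lborel) (\<lambda>z. ?w z * (\<phi> (fst z) * Phi z))"
    using integrable_bounded_mult_Cc[of _ ?w 1]
    by (simp add: lborel_prod mult.commute borel_prod[symmetric] indicator_def)
  have "(LINT z|density lborel (\<lambda>(x, y). ennreal (indicator {-r..r} (x - y))). \<phi> (fst z) * Phi z)
      = (LINT z|(lborel \<Otimes>\<^sub>M lborel). ?w z * (\<phi> (fst z) * Phi z))"
    unfolding split_beta' lborel_prod[symmetric]
    by (subst integral_density) (auto simp: lborel_prod borel_prod[symmetric])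
  also have "\<dots> = (LINT x|lborel. LINT y|lborel. ?w (x, y) * (\<phi> x * Phi (x, y)))"
    using lborel_pair.integral_fst'[OF int] by simp
  also have "\<dots> = (LINT x|lborel. \<phi> x * band_slice Phi r x)"
    by (simp add: band_slice_eq_lborel_integral[OF Cc_continuous[OF Phi]] mult.left_commute)
  finally show ?thesis .
qed

lemma eq_band_slice_if_density_integrals_eq:
  fixes Phi :: "real \<times> real \<Rightarrow> real" and g :: "real \<Rightarrow> real"
  assumes Phi: "Cc Phi" and g: "continuous_on UNIV g"
    and eq: "\<And>\<phi>. Cc \<phi> \<Longrightarrow> (LINT x|lborel. \<phi> x * g x)
      = (LINT z|density lborel (\<lambda>(x, y). ennreal (indicator {-r..r} (x - y))). \<phi> (fst z) * Phi z)"
  shows "g = band_slice Phi r"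
proof (rule continuous_eq_if_Cc_integrals_eq[OF g])
  show "continuous_on UNIV (band_slice Phi r)"
    by (rule continuous_on_band_slice[OF Cc_continuous[OF Phi]])
  show "(LINT x|lborel. \<phi> x * g x) = (LINT x|lborel. \<phi> x * band_slice Phi r x)" if "Cc \<phi>" for \<phi>
    using eq[OF that] integral_band_density[OF Phi Cc_continuous[OF that]] by simp
qed

lemma poisson_k_eq: "poisson_k k x = real k / (pi * (1 + (real k * x)^2))"
  by (simp add: poisson_k_def poisson_def)

lemma continuous_on_poisson_k: "continuous_on UNIV (poisson_k k)"
proof -
  have "pi * (1 + (real k * x)^2) \<noteq> 0" for x
    by (simp add: add_pos_nonneg order.strict_implies_not_eq[symmetric])
  then show ?thesis
    unfolding poisson_k_eq[abs_def] by (intro continuous_intros) auto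
qed

lemma eq_over_poisson_k:
  assumes "k \<ge> 1" and "c * poisson_k k x = s"
  shows "c = 2 * pi * ((1 / real k)^2 + x^2) * (s / (2 * (1 / real k)))"
proof -
  have "pi * (1 + (real k * x)^2) > 0"
    by (simp add: add_pos_nonneg)
  then have "c = s * (pi * (1 + (real k * x)^2)) / real k"
    using assms by (simp add: poisson_k_eq field_simps)
  also have "\<dots> = 2 * pi * ((1 / real k)^2 + x^2) * (s / (2 * (1 / real k)))"
    using assms by (simp add: field_simps power2_eq_square)
  finally show ?thesis .
qed

theorem proposition10p1:
  fixes Phi :: "real \<times> real \<Rightarrow> real"
    and Kir :: "nat \<Rightarrow> real \<Rightarrow> real"
  assumes Phi: "Cc Phi"
    and Kir_cont: "\<And>k. k \<ge> 1 \<Longrightarrow> continuous_on UNIV (Kir k)"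
    and Kir_def: "\<And>k \<phi>. k \<ge> 1 \<Longrightarrow> Cc \<phi> \<Longrightarrow>
        (LINT x|lborel. \<phi> x * Kir k x * poisson_k k x)
        = (LINT z|Pi_k k. \<phi> (fst z) * Phi z)"
  shows "\<And>x. (\<lambda>k. Kir k x) \<longlonglongrightarrow> 2 * pi * x^2 * Phi (x, x)"
proof -
  fix x :: real
  have Kir_eq: "Kir k x = 2 * pi * ((1 / real k)^2 + x^2) * (band_slice Phi (1 / real k) x / (2 * (1 / real k)))"
    if k: "k \<ge> 1" for k
  proof -
    have "(\<lambda>y. Kir k y * poisson_k k y) = band_slice Phi (1 / real k)"
      using Kir_def[OF k]
      by (intro eq_band_slice_if_density_integrals_eq Phi continuous_intros Kir_cont[OF k] continuous_on_poisson_k)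
        (simp add: Pi_k_def mult.assoc)
    then show ?thesis
      using k by (intro eq_over_poisson_k) (auto simp: fun_eq_iff)
  qed
  have "filterlim (\<lambda>k. 1 / real k) (at_right 0) sequentially"
    by (intro tendsto_imp_filterlim_at_right lim_1_over_n eventually_sequentiallyI[of 1]) auto
  then have "(\<lambda>k. band_slice Phi (1 / real k) x / (2 * (1 / real k))) \<longlonglongrightarrow> Phi (x, x)"
    by (rule filterlim_compose[OF band_slice_average_tendsto[OF Cc_continuous[OF Phi]]])
  then have "(\<lambda>k. 2 * pi * ((1 / real k)^2 + x^2) * (band_slice Phi (1 / real k) x / (2 * (1 / real k))))
      \<longlonglongrightarrow> 2 * pi * (0^2 + x^2) * Phi (x, x)"
    by (intro tendsto_intros)
  then have "(\<lambda>k. Kir k x) \<longlonglongrightarrow> 2 * pi * (0^2 + x^2) * Phi (x, x)"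
    by (rule Lim_transform_eventually) (auto intro: eventually_sequentiallyI[of 1] simp: Kir_eq)
  then show "(\<lambda>k. Kir k x) \<longlonglongrightarrow> 2 * pi * x^2 * Phi (x, x)"
    by simp
qed

end
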